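(* Let $\beta,p$ be positive integers with $p\le\beta$. Then $$C(1,\beta,p)\ge\max\left\{\frac{C_{WWL}(\beta,p)}{2},\frac{p}{\beta}\right\}.$$
   Context: Memory cells are binary; cell-state vectors of $n$ cells lie in $\{0,1\}^n$. A code on $n$ cells consists, for each write $i\ge1$, of a real $R_i\ge0$, an encoder $\mathcal{E}_i:\{1,\ldots,\lfloor2^{nR_i}\rfloor\}\times\{0,1\}^n\to\{0,1\}^n$ and decoder $\mathcal{D}_i$ with $\mathcal{D}_i(\mathcal{E}_i(m,\mathbf{u}))=m$ (both may depend on $i$). Starting from $\mathbf{v}_0=\mathbf{0}$, messages produce states $\mathbf{v}_i=\mathcal{E}_i(m_i,\mathbf{v}_{i-1})$. The code is $(\alpha,\beta,p)$-constrained if for every message sequence, every $i\ge0$ and every $1\le j\le n-\beta+1$, $|\{(k,\ell): v_{i+k,j+\ell}\ne v_{i+k+1,j+\ell}, 0\le k<\alpha, 0\le\ell<\beta\}|\le p$. Rate: $\lim_{m\to\infty}\frac1m\sum_{i=1}^mR_i$. $C_n(\alpha,\beta,p)$ is the supremum of rates of $(\alpha,\beta,p)$-constrained codes on $n$ cells and $C(\alpha,\beta,p)=\lim_{n\to\infty}C_n(\alpha,\beta,p)$. A binary vector is $(\beta,p)$-window-weight-limited (WWL) if every $\beta$ consecutive entries contain at most $p$ ones; with $\mathcal{S}_n(\beta,p)$ the set of such vectors of length $n$, $C_{WWL}(\beta,p)=\lim_{n\to\infty}\frac1n\log_2|\mathcal{S}_n(\beta,p)|$. *)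

theory Defs
  imports Complex_Main
begin

text \<open>Cell-state vectors of n binary cells are represented as bool lists of length n
  (True = 1, False = 0), indexed from 0.  Writes are indexed by i \<ge> 1.
  For write i, R i is the rate, E i the encoder (message, previous state) \<mapsto> new state,
  D i the decoder.\<close>

definition num_msgs :: "nat \<Rightarrow> real \<Rightarrow> nat" where
  "num_msgs n r = nat \<lfloor>(2::real) powr (real n * r)\<rfloor>"

definition is_code ::
  "nat \<Rightarrow> (nat \<Rightarrow> real) \<Rightarrow> (nat \<Rightarrow> nat \<Rightarrow> bool list \<Rightarrow> bool list)
     \<Rightarrow> (nat \<Rightarrow> bool list \<Rightarrow> nat) \<Rightarrow> bool" where
  "is_code n R E D \<longleftrightarrow>
     (\<forall>i\<ge>1. R i \<ge> 0 \<and>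
        (\<forall>m u. m \<in> {1..num_msgs n (R i)} \<and> length u = n \<longrightarrow>
             length (E i m u) = n \<and> D i (E i m u) = m))"

primrec states ::
  "nat \<Rightarrow> (nat \<Rightarrow> nat \<Rightarrow> bool list \<Rightarrow> bool list) \<Rightarrow> (nat \<Rightarrow> nat) \<Rightarrow> nat \<Rightarrow> bool list" where
  "states n E msg 0 = replicate n False"
| "states n E msg (Suc i) = E (Suc i) (msg (Suc i)) (states n E msg i)"

definition valid_msgs :: "nat \<Rightarrow> (nat \<Rightarrow> real) \<Rightarrow> (nat \<Rightarrow> nat) \<Rightarrow> bool" where
  "valid_msgs n R msg \<longleftrightarrow> (\<forall>i\<ge>1. msg i \<in> {1..num_msgs n (R i)})"

definition constrained ::
  "nat \<Rightarrow> nat \<Rightarrow> nat \<Rightarrow> nat \<Rightarrow> (nat \<Rightarrow> real) \<Rightarrow> (nat \<Rightarrow> nat \<Rightarrow> bool list \<Rightarrow> bool list) \<Rightarrow> bool" where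
  "constrained n \<alpha> \<beta> p R E \<longleftrightarrow>
     (\<forall>msg. valid_msgs n R msg \<longrightarrow>
        (\<forall>i j. j + \<beta> \<le> n \<longrightarrow>
           card {(k, l). k < \<alpha> \<and> l < \<beta> \<and>
                 states n E msg (i + k) ! (j + l) \<noteq> states n E msg (i + k + 1) ! (j + l)} \<le> p))"

definition has_rate :: "(nat \<Rightarrow> real) \<Rightarrow> real \<Rightarrow> bool" where
  "has_rate R r \<longleftrightarrow> (\<lambda>m. (\<Sum>i=1..m. R i) / real m) \<longlonglongrightarrow> r"

definition C_n :: "nat \<Rightarrow> nat \<Rightarrow> nat \<Rightarrow> nat \<Rightarrow> real" where
  "C_n n \<alpha> \<beta> p = Sup {r. \<exists>R E D. is_code n R E D \<and> constrained n \<alpha> \<beta> p R E \<and> has_rate R r}"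

definition C :: "nat \<Rightarrow> nat \<Rightarrow> nat \<Rightarrow> real" where
  "C \<alpha> \<beta> p = lim (\<lambda>n. C_n n \<alpha> \<beta> p)"

definition WWL_set :: "nat \<Rightarrow> nat \<Rightarrow> nat \<Rightarrow> bool list set" where
  "WWL_set n \<beta> p = {x. length x = n \<and>
      (\<forall>j. j + \<beta> \<le> n \<longrightarrow> length (filter id (take \<beta> (drop j x))) \<le> p)}"

definition C_WWL :: "nat \<Rightarrow> nat \<Rightarrow> real" where
  "C_WWL \<beta> p = lim (\<lambda>n. log 2 (real (card (WWL_set n \<beta> p))) / real n)"

end

theory Submission
  imports Defs
begin

text \<open>The per-cell capacities \<open>C_n(1,\<beta>,p)\<close> converge because they are almost superadditive:
  two codes placed side by side with \<open>\<beta>\<close> never-written cells between them jointly obey the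
  window constraint, so a code on \<open>n\<close> cells yields codes on every \<open>N \<ge> n + \<beta>\<close> cells of
  rate about \<open>n / (n + \<beta>)\<close> times its own. Rates must have an exact Cesaro limit, so the
  rates of the combined code are smoothed by Lindley's queueing recursion. The two lower
  bounds come from explicit codes: odd writes store a window-weight-limited word and even
  writes erase it, which gives half of \<open>C_WWL(\<beta>,p)\<close>; or only \<open>p\<close> cells of every block of
  \<open>\<beta>\<close> consecutive cells are used and every write stores an arbitrary word on them, which
  gives \<open>p/\<beta>\<close>.\<close>


lemma tendsto_if_eventually_almost_ge:
  fixes f :: "nat \<Rightarrow> real"
  assumes sub: "(f \<circ> \<sigma>) \<longlonglongrightarrow> L" and mono: "strict_mono \<sigma>"
    and almost_ge: "\<And>n \<epsilon>. n \<ge> n1 \<Longrightarrow> \<epsilon> > 0 \<Longrightarrow> \<forall>\<^sub>F N in sequentially. f n - c / real n - \<epsilon> \<le> f N"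
  shows "f \<longlonglongrightarrow> L"
proof -
  have small: "\<forall>\<^sub>F n in sequentially. n \<ge> n1 \<and> \<bar>c\<bar> / real n < \<epsilon>" if "\<epsilon> > 0" for \<epsilon>
  proof -
    have "(\<lambda>n. \<bar>c\<bar> / real n) \<longlonglongrightarrow> 0"
      by (rule lim_const_over_n)
    then have "\<forall>\<^sub>F n in sequentially. \<bar>c\<bar> / real n < \<epsilon>"
      using that by (auto dest: order_tendstoD(2))
    then show ?thesis
      using eventually_ge_at_top by (rule eventually_conj[rotated])
  qed
  have upper: "\<forall>\<^sub>F n in sequentially. f n \<le> L + 2 * \<epsilon>" if "\<epsilon> > 0" for \<epsilon>
    \<comment> \<open>the hypothesis at \<open>n\<close>, evaluated along the subsequence, bounds \<open>f n\<close> by the limit\<close>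
    using small[OF that]
  proof eventually_elim
    case (elim n)
    have "\<forall>\<^sub>F k in sequentially. f n - c / real n - \<epsilon> \<le> f (\<sigma> k)"
      using eventually_subseq[OF mono almost_ge[of n \<epsilon>]] elim that by blast
    then have "f n - c / real n - \<epsilon> \<le> L"
      by (intro tendsto_lowerbound[OF sub]) (auto simp: comp_def)
    moreover have "c / real n \<le> \<bar>c\<bar> / real n"
      by (simp add: divide_right_mono)
    ultimately show ?case using elim by linarith
  qed
  have lower: "\<forall>\<^sub>F N in sequentially. L - 3 * \<epsilon> \<le> f N" if "\<epsilon> > 0" for \<epsilon>
  proof -
    have "\<forall>\<^sub>F k in sequentially. f (\<sigma> k) > L - \<epsilon>"
      using order_tendstoD(1)[OF sub, of "L - \<epsilon>"] that by (simp add: comp_def)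
    with eventually_subseq[OF mono small[OF that]]
    have "\<forall>\<^sub>F k in sequentially. (\<sigma> k \<ge> n1 \<and> \<bar>c\<bar> / real (\<sigma> k) < \<epsilon>) \<and> f (\<sigma> k) > L - \<epsilon>"
      by (rule eventually_conj)
    then obtain n where n: "n \<ge> n1" "\<bar>c\<bar> / real n < \<epsilon>" "f n > L - \<epsilon>"
      using eventually_happens'[OF sequentially_bot] by blast
    have "c / real n \<le> \<bar>c\<bar> / real n"
      by (simp add: divide_right_mono)
    with almost_ge[OF n(1) that] n show ?thesis
      by (auto elim: eventually_mono)
  qed
  show ?thesis
  proof (rule order_tendstoI)
    fix a assume "a < L"
    with lower[of "(L - a) / 4"] have "\<forall>\<^sub>F N in sequentially. L - 3 * ((L - a) / 4) \<le> f N"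
      by simp
    then show "\<forall>\<^sub>F N in sequentially. a < f N"
      by eventually_elim (use \<open>a < L\<close> in \<open>simp add: field_simps\<close>)
  next
    fix a assume "L < a"
    with upper[of "(a - L) / 4"] have "\<forall>\<^sub>F N in sequentially. f N \<le> L + 2 * ((a - L) / 4)"
      by simp
    then show "\<forall>\<^sub>F N in sequentially. f N < a"
      by eventually_elim (use \<open>L < a\<close> in \<open>simp add: field_simps\<close>)
  qed
qed

lemma convergent_if_eventually_almost_ge:
  fixes f :: "nat \<Rightarrow> real"
  assumes "Bseq f"
    and almost_ge: "\<And>n \<epsilon>. n \<ge> n1 \<Longrightarrow> \<epsilon> > 0 \<Longrightarrow> \<forall>\<^sub>F N in sequentially. f n - c / real n - \<epsilon> \<le> f N"
  shows "convergent f"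
proof -
  obtain \<sigma> where "strict_mono \<sigma>" and "monoseq (f \<circ> \<sigma>)"
    using seq_monosub by (auto simp: comp_def)
  moreover have "Bseq (f \<circ> \<sigma>)"
    using \<open>Bseq f\<close> by (auto simp: Bseq_def)
  ultimately obtain L where "(f \<circ> \<sigma>) \<longlonglongrightarrow> L" and "strict_mono \<sigma>"
    using Bseq_monoseq_convergent convergent_def by blast
  then have "f \<longlonglongrightarrow> L"
    using almost_ge by (rule tendsto_if_eventually_almost_ge)
  then show ?thesis
    by (auto simp: convergent_def)
qed

lemma subadditive_le_multiple:
  fixes a :: "nat \<Rightarrow> real"
  assumes sub: "\<And>m n. a (m + n) \<le> a m + a n"
  shows "a (q * m + r) \<le> real q * a m + a r"
proof (induction q)
  case (Suc q)
  have "a (Suc q * m + r) \<le> a m + a (q * m + r)"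
    using sub[of m "q * m + r"] by (simp add: add.assoc)
  with Suc show ?case by (simp add: algebra_simps)
qed simp

lemma convergent_subadditive_over_n:
  fixes a :: "nat \<Rightarrow> real"
  assumes sub: "\<And>m n. a (m + n) \<le> a m + a n" and nonneg: "\<And>n. a n \<ge> 0"
  shows "convergent (\<lambda>n. a n / real n)"
proof -
  have "convergent (\<lambda>n. - (a n / real n))"
  proof (rule convergent_if_eventually_almost_ge[of _ 1 0])
    have "a n / real n \<le> a 1 + a 0" for n
    proof (cases "n = 0")
      case False
      have "a n \<le> real n * a 1 + a 0"
        using subadditive_le_multiple[OF sub, of n 1 0] by simp
      also have "\<dots> \<le> real n * (a 1 + a 0)"
        using False nonneg[of 0] by (simp add: algebra_simps mult_le_cancel_right1)
      finally show ?thesis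
        using False by (simp add: field_simps)
    qed (use nonneg in simp)
    then show "Bseq (\<lambda>n. - (a n / real n))"
      using nonneg by (intro BseqI'[of _ "a 1 + a 0"]) simp
  next
    fix m :: nat and \<epsilon> :: real
    assume "1 \<le> m" and "\<epsilon> > 0"
    define K where "K = (\<Sum>r<m. a r)"
    have "(\<lambda>N. K / real N) \<longlonglongrightarrow> 0"
      by (rule lim_const_over_n)
    then have "\<forall>\<^sub>F N in sequentially. K / real N < \<epsilon>"
      using \<open>\<epsilon> > 0\<close> by (auto dest: order_tendstoD(2))
    then show "\<forall>\<^sub>F N in sequentially. - (a m / real m) - 0 / real m - \<epsilon> \<le> - (a N / real N)"
      using eventually_ge_at_top[of "1::nat"]
    proof eventually_elim
      case (elim N)
      have "a (N mod m) \<le> K"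
        unfolding K_def using \<open>1 \<le> m\<close> nonneg by (intro member_le_sum) auto
      moreover have "real (N div m) * a m \<le> real N / real m * a m"
        using nonneg[of m] by (intro mult_right_mono) (simp_all add: of_nat_div_le_of_nat)
      moreover have "a N \<le> real (N div m) * a m + a (N mod m)"
        using subadditive_le_multiple[OF sub, of "N div m" m "N mod m"] by simp
      moreover have "(a m / real m + K / real N) * real N = real N / real m * a m + K"
        using elim(2) by (simp add: field_simps)
      ultimately have "a N \<le> (a m / real m + K / real N) * real N"
        by linarith
      then have "a N / real N \<le> a m / real m + K / real N"
        using elim(2) by (simp add: pos_divide_le_eq)
      then show ?case using elim by simp
    qed
  qed
  then show ?thesis
    by (subst convergent_minus_iff)
qed

lemma of_nat_div_ge_minus_one:
  assumes "d > 0"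
  shows "real n / real d - 1 \<le> real (n div d)"
proof -
  have "real n = real (n div d) * real d + real (n mod d)"
    by (metis div_mult_mod_eq of_nat_add of_nat_mult)
  moreover have "real (n mod d) < real d"
    using assms by simp
  ultimately have "real n < (real (n div d) + 1) * real d"
    by (simp add: algebra_simps)
  with assms show ?thesis
    by (simp add: field_simps)
qed

lemma div_over_n_tendsto:
  assumes "d > 0"
  shows "(\<lambda>n. real (n div d) / real n) \<longlonglongrightarrow> 1 / real d"
proof (rule tendsto_sandwich)
  show "\<forall>\<^sub>F n in sequentially. 1 / real d - 1 / real n \<le> real (n div d) / real n"
    using eventually_ge_at_top[of "1::nat"]
  proof eventually_elim
    case (elim n)
    have "1 / real d - 1 / real n = (real n / real d - 1) / real n"
      using elim by (simp add: field_simps)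
    also have "\<dots> \<le> real (n div d) / real n"
      using of_nat_div_ge_minus_one[OF assms, of n] by (intro divide_right_mono) simp_all
    finally show ?case .
  qed
  have "real (n div d) / real n \<le> 1 / real d" for n
  proof (cases "n = 0")
    case False
    have "real (n div d) / real n \<le> (real n / real d) / real n"
      by (intro divide_right_mono of_nat_div_le_of_nat) simp
    also have "\<dots> = 1 / real d"
      using False by simp
    finally show ?thesis .
  qed simp
  then show "\<forall>\<^sub>F n in sequentially. real (n div d) / real n \<le> 1 / real d"
    by simp
  show "(\<lambda>n. 1 / real d - 1 / real n) \<longlonglongrightarrow> 1 / real d"
    using tendsto_diff[OF tendsto_const lim_const_over_n[of 1]] by simp
qed simp

lemma div_mult_divide_ge:
  assumes "d > 0" "N > 0"
  shows "A / real d - \<bar>A\<bar> / real N \<le> real (N div d) * A / real N"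
proof (cases "A \<ge> 0")
  case True
  have "A / real d - A / real N = (real N / real d - 1) * A / real N"
    using assms by (simp add: field_simps)
  also have "\<dots> \<le> real (N div d) * A / real N"
    using of_nat_div_ge_minus_one[OF \<open>d > 0\<close>] True by (intro divide_right_mono mult_right_mono) simp_all
  finally show ?thesis
    using True by simp
next
  case False
  have "real N / real d * A \<le> real (N div d) * A"
    using False by (intro mult_right_mono_neg) (simp_all add: of_nat_div_le_of_nat)
  then have "A / real d \<le> real (N div d) * A / real N"
    using assms by (simp add: field_simps)
  moreover have "0 \<le> \<bar>A\<bar> / real N"
    by simp
  ultimately show ?thesis
    by linarith
qed

lemma inj_on_mod_window:
  fixes b j :: nat
  shows "inj_on (\<lambda>x. x mod b) {j..<j + b}"
proof -
  have "x = y" if "x \<in> {j..<j + b}" "y \<in> {j..<j + b}" "x mod b = y mod b" "x \<le> y" for x y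
  proof -
    have "b dvd y - x"
      using mod_eq_dvd_iff_nat[of x y b] that by simp
    moreover have "y - x < b"
      using that by auto
    ultimately show "x = y"
      using \<open>x \<le> y\<close> nat_dvd_not_less[of "y - x" b] by (cases "x = y") auto
  qed
  then show ?thesis
    by (intro inj_onI) (metis nle_le)
qed

lemma mixed_radix_digits:
  fixes m ma mb :: nat
  assumes "1 \<le> mb" "m \<in> {1..ma * mb}"
  shows "(m - 1) div mb + 1 \<in> {1..ma}" "(m - 1) mod mb + 1 \<in> {1..mb}"
    and "((m - 1) div mb + 1 - 1) * mb + ((m - 1) mod mb + 1) = m"
proof -
  have "m - 1 < ma * mb"
    using assms(2) by auto
  then have "(m - 1) div mb < ma"
    using assms(1) by (simp add: div_less_iff_less_mult)
  then show "(m - 1) div mb + 1 \<in> {1..ma}"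
    by simp
  show "(m - 1) mod mb + 1 \<in> {1..mb}"
    using assms by (simp add: Suc_le_eq)
  have "(m - 1) div mb * mb + (m - 1) mod mb = m - 1"
    by (rule div_mult_mod_eq)
  then show "((m - 1) div mb + 1 - 1) * mb + ((m - 1) mod mb + 1) = m"
    using assms(2) by simp
qed

section \<open>Window-weight-limited words\<close>

lemma finite_WWL_set: "finite (WWL_set n \<beta> p)"
proof (rule finite_subset)
  show "WWL_set n \<beta> p \<subseteq> {xs. set xs \<subseteq> UNIV \<and> length xs = n}"
    unfolding WWL_set_def by auto
  show "finite {xs. set xs \<subseteq> (UNIV :: bool set) \<and> length xs = n}"
    by (rule finite_lists_length_eq) simp
qed

lemma replicate_False_in_WWL_set: "replicate n False \<in> WWL_set n \<beta> p"
  unfolding WWL_set_def by (simp add: take_replicate drop_replicate)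

lemma card_WWL_set_pos: "card (WWL_set n \<beta> p) > 0"
  using finite_WWL_set replicate_False_in_WWL_set card_gt_0_iff by blast

lemma take_in_WWL_set:
  assumes "x \<in> WWL_set (m + n) \<beta> p" shows "take m x \<in> WWL_set m \<beta> p"
proof -
  have "take \<beta> (drop j (take m x)) = take \<beta> (drop j x)" if "j + \<beta> \<le> m" for j
    using that by (simp add: drop_take min_def)
  with assms show ?thesis
    unfolding WWL_set_def by auto
qed

lemma drop_in_WWL_set:
  assumes "x \<in> WWL_set (m + n) \<beta> p" shows "drop m x \<in> WWL_set n \<beta> p"
proof -
  have "length (filter id (take \<beta> (drop j (drop m x)))) \<le> p" if "j + \<beta> \<le> n" for j
    using assms that unfolding WWL_set_def by (simp add: add.commute[of j])
  with assms show ?thesis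
    unfolding WWL_set_def by simp
qed

lemma card_WWL_set_add_le:
  "card (WWL_set (m + n) \<beta> p) \<le> card (WWL_set m \<beta> p) * card (WWL_set n \<beta> p)"
proof -
  have "inj_on (\<lambda>x. (take m x, drop m x)) (WWL_set (m + n) \<beta> p)"
    by (intro inj_onI) (metis append_take_drop_id prod.inject)
  moreover have "(\<lambda>x. (take m x, drop m x)) ` WWL_set (m + n) \<beta> p \<subseteq> WWL_set m \<beta> p \<times> WWL_set n \<beta> p"
    using take_in_WWL_set drop_in_WWL_set by blast
  ultimately have "card (WWL_set (m + n) \<beta> p) \<le> card (WWL_set m \<beta> p \<times> WWL_set n \<beta> p)"
    by (intro card_inj_on_le) (simp_all add: finite_WWL_set)
  then show ?thesis
    by (simp add: card_cartesian_product)
qed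

lemma WWL_rate_tendsto:
  "(\<lambda>n. log 2 (real (card (WWL_set n \<beta> p))) / real n) \<longlonglongrightarrow> C_WWL \<beta> p"
proof -
  let ?a = "\<lambda>n. log 2 (real (card (WWL_set n \<beta> p)))"
  have pos: "real (card (WWL_set n \<beta> p)) > 0" for n
    using card_WWL_set_pos by simp
  have "convergent (\<lambda>n. ?a n / real n)"
  proof (rule convergent_subadditive_over_n)
    fix m n
    have "?a (m + n) \<le> log 2 (real (card (WWL_set m \<beta> p)) * real (card (WWL_set n \<beta> p)))"
      using card_WWL_set_add_le[of m n \<beta> p] pos by (simp flip: of_nat_mult)
    also have "\<dots> = ?a m + ?a n"
      using pos by (simp add: log_mult)
    finally show "?a (m + n) \<le> ?a m + ?a n" .
  next
    show "?a n \<ge> 0" for n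
      using card_WWL_set_pos[of n \<beta> p] by simp
  qed
  then show ?thesis
    unfolding C_WWL_def by (simp add: convergent_LIMSEQ_iff)
qed

section \<open>Rate sequences\<close>

lemma has_rate_le:
  assumes "has_rate R r" "\<And>i. i \<ge> 1 \<Longrightarrow> R i \<le> B"
  shows "r \<le> B"
proof (rule LIMSEQ_le_const2[OF assms(1)[unfolded has_rate_def]])
  have "(\<Sum>i=1..m. R i) / real m \<le> B" if "m \<ge> 1" for m
  proof -
    have "(\<Sum>i=1..m. R i) \<le> (\<Sum>i=1..m. B)"
      using assms(2) by (intro sum_mono) auto
    then show ?thesis
      using that by (simp add: divide_le_eq mult.commute)
  qed
  then show "\<exists>N. \<forall>m\<ge>N. (\<Sum>i=1..m. R i) / real m \<le> B"
    by blast
qed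

lemma has_rate_affine:
  assumes "has_rate R r"
  shows "has_rate (\<lambda>i. a * R i + b) (a * r + b)"
proof -
  have "(\<lambda>m. a * ((\<Sum>i=1..m. R i) / real m) + b) \<longlonglongrightarrow> a * r + b"
    using assms unfolding has_rate_def by (intro tendsto_intros)
  moreover have "\<forall>\<^sub>F m in sequentially. a * ((\<Sum>i=1..m. R i) / real m) + b = (\<Sum>i=1..m. a * R i + b) / real m"
    using eventually_ge_at_top[of "1::nat"]
    by eventually_elim (simp add: sum.distrib sum_distrib_left field_simps)
  ultimately show ?thesis
    unfolding has_rate_def by (rule Lim_transform_eventually)
qed

lemma has_rate_const: "has_rate (\<lambda>_. c) c"
  using has_rate_affine[of "\<lambda>_. 0" 0 0 c] by (simp add: has_rate_def)

lemma has_rate_alternating: "has_rate (\<lambda>i. if odd i then c else 0) (c / 2)"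
proof -
  have sum: "(\<Sum>i=1..m. if odd i then c else 0) = c * real (m - m div 2)" for m
  proof (induction m)
    case (Suc m)
    have "Suc m - Suc m div 2 = m - m div 2 + (if odd (Suc m) then 1 else 0)"
      by presburger
    then show ?case
      using Suc by (simp add: algebra_simps)
  qed simp
  have "(\<lambda>m. c * (1 - real (m div 2) / real m)) \<longlonglongrightarrow> c * (1 - 1 / real (2::nat))"
    by (intro tendsto_intros div_over_n_tendsto) simp
  moreover have "\<forall>\<^sub>F m in sequentially. c * (1 - real (m div 2) / real m) = (\<Sum>i=1..m. if odd i then c else 0) / real m"
    using eventually_ge_at_top[of "1::nat"]
    by eventually_elim (unfold sum, simp add: of_nat_diff field_simps)
  ultimately show ?thesis
    unfolding has_rate_def by (simp add: Lim_transform_eventually)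
qed

lemma sublinear_prefix_bound:
  fixes e :: "nat \<Rightarrow> real"
  assumes sublinear: "(\<lambda>l. e l / real l) \<longlonglongrightarrow> 0" and "\<epsilon> > 0"
  shows "\<forall>\<^sub>F m in sequentially. \<forall>j\<le>m. \<bar>e j\<bar> \<le> \<epsilon> * real m"
proof -
  obtain L where L: "\<And>l. l \<ge> L \<Longrightarrow> \<bar>e l / real l\<bar> < \<epsilon>"
    using LIMSEQ_D[OF sublinear \<open>\<epsilon> > 0\<close>] by auto
  define K where "K = (\<Sum>l\<le>L. \<bar>e l\<bar>)"
  obtain M :: nat where "K / \<epsilon> < real M"
    using reals_Archimedean2 by blast
  then have "K < \<epsilon> * real M"
    using \<open>\<epsilon> > 0\<close> by (simp add: pos_divide_less_eq mult.commute)
  then have "K \<le> \<epsilon> * real m" if "m \<ge> M" for m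
    using that \<open>\<epsilon> > 0\<close> by (smt (verit) mult_left_mono of_nat_le_iff)
  then show ?thesis
    unfolding eventually_sequentially
  proof (intro exI allI impI)
    fix m j assume "m \<ge> M" "j \<le> m"
    show "\<bar>e j\<bar> \<le> \<epsilon> * real m"
    proof (cases "j \<le> L")
      case True
      then have "\<bar>e j\<bar> \<le> K"
        unfolding K_def by (intro member_le_sum) auto
      also have "K \<le> \<epsilon> * real m"
        using \<open>m \<ge> M\<close> by (rule \<open>\<And>m. m \<ge> M \<Longrightarrow> K \<le> \<epsilon> * real m\<close>)
      finally show ?thesis .
    next
      case False
      then have "\<bar>e j\<bar> / real j < \<epsilon>"
        using L[of j] by simp
      then have "\<bar>e j\<bar> \<le> \<epsilon> * real j"
        using False by (simp add: pos_divide_less_eq)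
      also have "\<dots> \<le> \<epsilon> * real m"
        using \<open>j \<le> m\<close> \<open>\<epsilon> > 0\<close> by simp
      finally show ?thesis .
    qed
  qed
qed

text \<open>Lindley's recursion: the backlog of a queue that receives \<open>\<rho>\<close> in every step and serves
  at most \<open>t i\<close> in step \<open>i\<close>. The amounts actually served lie in \<open>[0, t i]\<close> and average to
  \<open>\<rho>\<close> as soon as the backlog grows sublinearly. This yields rates with an exact average below
  pointwise bounds that need not have an average themselves.\<close>

primrec backlog :: "real \<Rightarrow> (nat \<Rightarrow> real) \<Rightarrow> nat \<Rightarrow> real" where
  "backlog \<rho> t 0 = 0"
| "backlog \<rho> t (Suc m) = max 0 (backlog \<rho> t m + \<rho> - t (Suc m))"

definition served :: "real \<Rightarrow> (nat \<Rightarrow> real) \<Rightarrow> nat \<Rightarrow> real" where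
  "served \<rho> t i = backlog \<rho> t (i - 1) + \<rho> - backlog \<rho> t i"

lemma backlog_nonneg: "backlog \<rho> t m \<ge> 0"
  by (cases m) simp_all

lemma served_bounds:
  assumes "i \<ge> 1" "t i \<ge> 0" "\<rho> \<ge> 0"
  shows "0 \<le> served \<rho> t i \<and> served \<rho> t i \<le> t i"
proof -
  obtain m where "i = Suc m"
    using \<open>i \<ge> 1\<close> by (cases i) auto
  then show ?thesis
    using assms backlog_nonneg[of \<rho> t m] by (simp add: served_def)
qed

lemma sum_served: "(\<Sum>i=1..m. served \<rho> t i) = \<rho> * real m - backlog \<rho> t m"
  by (induction m) (simp_all add: served_def algebra_simps)

lemma backlog_le_partial_sums:
  assumes below: "\<And>i. i \<ge> 1 \<Longrightarrow> w i \<le> t i"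
  shows "\<exists>j\<le>m. backlog \<rho> t m \<le> \<rho> * (real m - real j) - ((\<Sum>i=1..m. w i) - (\<Sum>i=1..j. w i))"
proof (induction m)
  case (Suc m)
  then obtain j where j: "j \<le> m"
    "backlog \<rho> t m \<le> \<rho> * (real m - real j) - ((\<Sum>i=1..m. w i) - (\<Sum>i=1..j. w i))"
    by blast
  show ?case
  proof (cases "backlog \<rho> t m + \<rho> - t (Suc m) \<le> 0")
    case True
    then show ?thesis
      by (intro exI[of _ "Suc m"]) simp
  next
    case False
    then show ?thesis
      using j below[of "Suc m"] by (intro exI[of _ j]) (simp add: algebra_simps)
  qed
qed simp

lemma backlog_sublinear:
  assumes below: "\<And>i. i \<ge> 1 \<Longrightarrow> w i \<le> t i"
    and average: "has_rate w \<tau>" and "\<rho> \<le> \<tau>"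
  shows "(\<lambda>m. backlog \<rho> t m / real m) \<longlonglongrightarrow> 0"
proof (rule order_tendstoI)
  fix a :: real assume "a < 0"
  have "backlog \<rho> t m / real m \<ge> 0" for m
    by (simp add: backlog_nonneg)
  with \<open>a < 0\<close> show "\<forall>\<^sub>F m in sequentially. a < backlog \<rho> t m / real m"
    by (intro always_eventually allI) (meson less_le_trans)
next
  fix a :: real assume "0 < a"
  define e where "e l = (\<Sum>i=1..l. w i) - \<tau> * real l" for l
  have "(\<lambda>l. (\<Sum>i=1..l. w i) / real l - \<tau>) \<longlonglongrightarrow> 0"
    using average by (simp add: LIM_zero has_rate_def)
  moreover have "\<forall>\<^sub>F l in sequentially. (\<Sum>i=1..l. w i) / real l - \<tau> = e l / real l"
    using eventually_ge_at_top[of "1::nat"] by eventually_elim (simp add: e_def field_simps)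
  ultimately have "(\<lambda>l. e l / real l) \<longlonglongrightarrow> 0"
    by (rule Lim_transform_eventually)
  then have "\<forall>\<^sub>F m in sequentially. \<forall>j\<le>m. \<bar>e j\<bar> \<le> a / 3 * real m"
    by (rule sublinear_prefix_bound) (use \<open>0 < a\<close> in simp)
  with eventually_ge_at_top[of "1::nat"]
  show "\<forall>\<^sub>F m in sequentially. backlog \<rho> t m / real m < a"
  proof eventually_elim
    case (elim m)
    obtain j where "j \<le> m"
      and j: "backlog \<rho> t m \<le> \<rho> * (real m - real j) - ((\<Sum>i=1..m. w i) - (\<Sum>i=1..j. w i))"
      using backlog_le_partial_sums[where w = w and t = t, OF below] by blast
    have "\<rho> * (real m - real j) \<le> \<tau> * (real m - real j)"
      using \<open>j \<le> m\<close> \<open>\<rho> \<le> \<tau>\<close> by (intro mult_right_mono) auto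
    with j have "backlog \<rho> t m \<le> e j - e m"
      by (simp add: e_def algebra_simps)
    also have "\<dots> \<le> 2 * (a / 3) * real m"
    proof -
      have "\<bar>e j\<bar> \<le> a / 3 * real m" "\<bar>e m\<bar> \<le> a / 3 * real m"
        using elim(2) \<open>j \<le> m\<close> by auto
      then show ?thesis by linarith
    qed
    also have "\<dots> < a * real m"
      using \<open>0 < a\<close> elim(1) by simp
    finally show ?case
      using elim(1) by (simp add: divide_less_eq)
  qed
qed

lemma exists_rate_below:
  assumes nonneg: "\<And>i. i \<ge> 1 \<Longrightarrow> 0 \<le> t i" and below: "\<And>i. i \<ge> 1 \<Longrightarrow> w i \<le> t i"
    and average: "has_rate w \<tau>" and "0 \<le> \<rho>" "\<rho> \<le> \<tau>"
  shows "\<exists>s. (\<forall>i\<ge>1. 0 \<le> s i \<and> s i \<le> t i) \<and> has_rate s \<rho>"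
proof (intro exI conjI allI impI)
  show "0 \<le> served \<rho> t i" "served \<rho> t i \<le> t i" if "i \<ge> 1" for i
    using served_bounds[of i t \<rho>] that nonneg[OF that] \<open>0 \<le> \<rho>\<close> by simp_all
  have "(\<lambda>m. \<rho> - backlog \<rho> t m / real m) \<longlonglongrightarrow> \<rho> - 0"
    by (intro tendsto_diff tendsto_const backlog_sublinear[OF below average \<open>\<rho> \<le> \<tau>\<close>])
  moreover have "\<forall>\<^sub>F m in sequentially. \<rho> - backlog \<rho> t m / real m = (\<Sum>i=1..m. served \<rho> t i) / real m"
    using eventually_ge_at_top[of "1::nat"] by eventually_elim (subst sum_served, simp add: field_simps)
  ultimately show "has_rate (served \<rho> t) \<rho>"
    unfolding has_rate_def by (simp add: Lim_transform_eventually)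
qed

definition changed :: "bool list \<Rightarrow> bool list \<Rightarrow> nat set" where
  "changed x y = {q. q < length x \<and> x ! q \<noteq> y ! q}"

lemma changed_subset: "changed x y \<subseteq> {..<length x}"
  unfolding changed_def by auto

lemma changed_append:
  assumes "length x = length y"
  shows "changed (x @ x') (y @ y') = changed x y \<union> (+) (length x) ` changed x' y'"
proof (rule set_eqI)
  fix q
  show "q \<in> changed (x @ x') (y @ y') \<longleftrightarrow> q \<in> changed x y \<union> (+) (length x) ` changed x' y'"
  proof (cases "q < length x")
    case True
    then show ?thesis
      using assms by (auto simp: changed_def nth_append)
  next
    case False
    then obtain r where "q = length x + r"
      using le_Suc_ex not_less by blast
    then show ?thesis
      using assms by (auto simp: changed_def nth_append)
  qed
qed

lemma changed_replicate_False: "changed (replicate n False) x = {q. q < n \<and> x ! q}"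
  unfolding changed_def by auto

lemma changed_commute: "length x = length y \<Longrightarrow> changed x y = changed y x"
  unfolding changed_def by auto

lemma card_shifted_window_le:
  fixes c j b :: nat
  shows "card ((+) c ` T \<inter> {j..<j + b}) \<le> card (T \<inter> {j - c..<j - c + b})"
proof -
  have "(+) c ` T \<inter> {j..<j + b} \<subseteq> (+) c ` (T \<inter> {j - c..<j - c + b})"
  proof
    fix q assume "q \<in> (+) c ` T \<inter> {j..<j + b}"
    then obtain x where "x \<in> T" "q = c + x" "j \<le> c + x" "c + x < j + b"
      by auto
    then show "q \<in> (+) c ` (T \<inter> {j - c..<j - c + b})"
      by (intro image_eqI[of _ _ x]) auto
  qed
  then have "card ((+) c ` T \<inter> {j..<j + b}) \<le> card ((+) c ` (T \<inter> {j - c..<j - c + b}))"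
    by (intro card_mono) auto
  also have "\<dots> = card (T \<inter> {j - c..<j - c + b})"
    by (simp add: card_image)
  finally show ?thesis .
qed

lemma card_window_shift:
  fixes j b :: nat
  shows "card {l. l < b \<and> P (j + l)} = card ({q. P q} \<inter> {j..<j + b})"
proof -
  have "{q. P q} \<inter> {j..<j + b} = (+) j ` {l. l < b \<and> P (j + l)}"
    by (auto simp: image_iff) (metis add_less_cancel_left le_add_diff_inverse)
  then show ?thesis
    by (simp add: card_image)
qed

definition supported_words :: "nat \<Rightarrow> nat set \<Rightarrow> bool list set" where
  "supported_words n P = {y. length y = n \<and> (\<forall>i<n. y ! i \<longrightarrow> i \<in> P)}"

lemma replicate_False_in_supported_words: "replicate n False \<in> supported_words n P"
  unfolding supported_words_def by simp

lemma changed_supported_words: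
  "x \<in> supported_words n P \<Longrightarrow> y \<in> supported_words n P \<Longrightarrow> changed x y \<subseteq> P"
  unfolding supported_words_def changed_def by auto

lemma card_supported_words:
  assumes "P \<subseteq> {..<n}"
  shows "finite (supported_words n P)" "card (supported_words n P) = 2 ^ card P"
proof -
  have "bij_betw (\<lambda>y. {i. i < n \<and> y ! i}) (supported_words n P) (Pow P)"
  proof (rule bij_betw_byWitness[where f' = "\<lambda>A. map (\<lambda>i. i \<in> A) [0..<n]"])
    show "\<forall>y\<in>supported_words n P. map (\<lambda>i. i \<in> {i. i < n \<and> y ! i}) [0..<n] = y"
      unfolding supported_words_def by (auto intro!: nth_equalityI)
    show "\<forall>A\<in>Pow P. {i. i < n \<and> map (\<lambda>i. i \<in> A) [0..<n] ! i} = A"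
      using assms by auto
  qed (auto simp: supported_words_def)
  moreover have "finite P"
    using assms finite_subset by blast
  ultimately show "finite (supported_words n P)" "card (supported_words n P) = 2 ^ card P"
    by (auto simp: bij_betw_finite bij_betw_same_card card_Pow)
qed

lemma card_periodic_cells:
  fixes b p q :: nat
  assumes "p \<le> b"
  shows "card ((\<lambda>(a, c). a * b + c) ` ({..<q} \<times> {..<p})) = q * p"
proof -
  have "inj_on (\<lambda>(a, c). a * b + c) ({..<q} \<times> {..<p})"
  proof (rule inj_onI, clarsimp)
    fix a c a' c' assume "c < p" "c' < p" "a * b + c = a' * b + c'"
    then have "(a * b + c) div b = (a' * b + c') div b" "(a * b + c) mod b = (a' * b + c') mod b"
      by simp_all
    with \<open>c < p\<close> \<open>c' < p\<close> \<open>p \<le> b\<close> show "a = a' \<and> c = c'"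
      by simp
  qed
  then show ?thesis
    by (simp add: card_image)
qed

lemma periodic_cells_below:
  fixes b p q :: nat
  assumes "p \<le> b"
  shows "(\<lambda>(a, c). a * b + c) ` ({..<q} \<times> {..<p}) \<subseteq> {..<q * b}"
proof clarsimp
  fix a c assume "a < q" "c < p"
  then have "a * b + c < (a + 1) * b"
    using assms by simp
  also have "\<dots> \<le> q * b"
    using \<open>a < q\<close> by (intro mult_right_mono) simp_all
  finally show "a * b + c < q * b" .
qed

definition decodes ::
  "nat \<Rightarrow> (nat \<Rightarrow> nat) \<Rightarrow> (nat \<Rightarrow> nat \<Rightarrow> bool list \<Rightarrow> bool list) \<Rightarrow> (nat \<Rightarrow> bool list \<Rightarrow> nat) \<Rightarrow> bool"
  where "decodes n M E D \<longleftrightarrow>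
    (\<forall>i\<ge>1. \<forall>m u. m \<in> {1..M i} \<and> length u = n \<longrightarrow> length (E i m u) = n \<and> D i (E i m u) = m)"

definition msgs_within :: "(nat \<Rightarrow> nat) \<Rightarrow> (nat \<Rightarrow> nat) \<Rightarrow> bool" where
  "msgs_within M msg \<longleftrightarrow> (\<forall>i\<ge>1. msg i \<in> {1..M i})"

lemma length_states:
  assumes "decodes n M E D" "msgs_within M msg"
  shows "length (states n E msg i) = n"
  using assms by (induction i) (auto simp: decodes_def msgs_within_def)

lemma decodes_if_is_code: "is_code n R E D \<Longrightarrow> decodes n (\<lambda>i. num_msgs n (R i)) E D"
  unfolding is_code_def decodes_def by auto

lemma num_msgs_ge_one: "r \<ge> 0 \<Longrightarrow> 1 \<le> num_msgs n r"
  unfolding num_msgs_def by (simp add: le_nat_floor ge_one_powr_ge_zero)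

lemma num_msgs_le_powr: "real (num_msgs n r) \<le> 2 powr (real n * r)"
  unfolding num_msgs_def by (simp add: of_nat_floor)

lemma powr_lt_num_msgs_plus_one: "2 powr (real n * r) < real (num_msgs n r) + 1"
proof -
  have "real (num_msgs n r) = real_of_int \<lfloor>2 powr (real n * r)\<rfloor>"
    unfolding num_msgs_def by (simp add: of_nat_int_floor)
  then show ?thesis
    by linarith
qed

lemma log_num_msgs_ge:
  assumes "r \<ge> 0"
  shows "real n * r - 1 \<le> log 2 (real (num_msgs n r))"
proof -
  have "2 powr (real n * r) < real (num_msgs n r) + 1"
    by (rule powr_lt_num_msgs_plus_one)
  also have "\<dots> \<le> 2 * real (num_msgs n r)"
    using num_msgs_ge_one[OF assms, of n] by simp
  finally have "2 powr (real n * r - 1) \<le> real (num_msgs n r)"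
    by (simp add: powr_diff)
  then show ?thesis
    using num_msgs_ge_one[OF assms, of n] by (simp add: le_log_iff)
qed

lemma rate_le_two:
  assumes "n \<ge> 1" "is_code n R E D" "i \<ge> 1"
  shows "R i \<le> 2"
proof -
  let ?M = "num_msgs n (R i)"
  have dec: "\<And>m. m \<in> {1..?M} \<Longrightarrow>
      length (E i m (replicate n False)) = n \<and> D i (E i m (replicate n False)) = m"
    using assms(2,3) unfolding is_code_def by auto
  \<comment> \<open>the messages of write \<open>i\<close> are encoded injectively into the \<open>2^n\<close> cell states\<close>
  have "inj_on (\<lambda>m. E i m (replicate n False)) {1..?M}"
    by (intro inj_onI) (metis dec)
  moreover have "(\<lambda>m. E i m (replicate n False)) ` {1..?M} \<subseteq> {xs. set xs \<subseteq> UNIV \<and> length xs = n}"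
    using dec by auto
  ultimately have "card {1..?M} \<le> card {xs. set xs \<subseteq> (UNIV :: bool set) \<and> length xs = n}"
    by (rule card_inj_on_le) (rule finite_lists_length_eq, simp)
  then have "?M \<le> 2 ^ n"
    using card_lists_length_eq[of "UNIV :: bool set" n] by simp
  have "2 powr (real n * R i) < real ?M + 1"
    by (rule powr_lt_num_msgs_plus_one)
  also have "\<dots> \<le> 2 powr (real n + 1)"
  proof -
    have "real ?M \<le> 2 ^ n"
      using \<open>?M \<le> 2 ^ n\<close> by (metis of_nat_le_iff of_nat_numeral of_nat_power)
    moreover have "(1::real) \<le> 2 ^ n"
      by (simp add: one_le_power)
    moreover have "2 powr (real n + 1) = 2 ^ n * 2"
      by (simp add: powr_add powr_realpow)
    ultimately show ?thesis
      by linarith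
  qed
  finally have "real n * R i < real n + 1"
    by simp
  also have "\<dots> \<le> real n * 2"
    using \<open>n \<ge> 1\<close> by simp
  finally show ?thesis
    using \<open>n \<ge> 1\<close> by simp
qed

section \<open>Codes whose writes change few cells per window\<close>

locale window_limit =
  fixes \<beta> p :: nat
  assumes window_pos: "0 < \<beta>"
begin

text \<open>Unlike \<open>constrained\<close>, \<open>sparse\<close> also bounds the windows that stick out beyond the last
  cell; only in this form does the constraint survive placing codes side by side.\<close>

definition sparse :: "nat set \<Rightarrow> bool" where
  "sparse S \<longleftrightarrow> (\<forall>j. card (S \<inter> {j..<j + \<beta>}) \<le> p)"

lemma sparse_subset: "sparse T \<Longrightarrow> S \<subseteq> T \<Longrightarrow> sparse S"
  unfolding sparse_def by (meson card_mono finite_Int finite_atLeastLessThan inf_mono le_trans order_refl)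

lemma sparse_if_full_windows:
  assumes "S \<subseteq> {..<n}" "\<beta> \<le> n" and full: "\<And>j. j + \<beta> \<le> n \<Longrightarrow> card (S \<inter> {j..<j + \<beta>}) \<le> p"
  shows "sparse S"
  unfolding sparse_def
proof
  fix j
  show "card (S \<inter> {j..<j + \<beta>}) \<le> p"
  proof (cases "j + \<beta> \<le> n")
    case False
    \<comment> \<open>a window sticking out of the cells is covered by the last full window\<close>
    with assms(1,2) have "S \<inter> {j..<j + \<beta>} \<subseteq> S \<inter> {n - \<beta>..<n - \<beta> + \<beta>}"
      by (force simp: subset_iff)
    then have "card (S \<inter> {j..<j + \<beta>}) \<le> card (S \<inter> {n - \<beta>..<n - \<beta> + \<beta>})"
      by (intro card_mono) auto
    also have "\<dots> \<le> p"
      using full[of "n - \<beta>"] \<open>\<beta> \<le> n\<close> by simp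
    finally show ?thesis .
  qed (rule full)
qed

lemma sparse_concat:
  assumes "S \<subseteq> {..<a}" "sparse S" "sparse T"
  shows "sparse (S \<union> (+) (a + \<beta>) ` T)"
  unfolding sparse_def
proof
  fix j
  \<comment> \<open>the gap of \<open>\<beta>\<close> unchanged cells keeps every window inside one of the two blocks\<close>
  show "card ((S \<union> (+) (a + \<beta>) ` T) \<inter> {j..<j + \<beta>}) \<le> p"
  proof (cases "j \<le> a")
    case True
    then have "(S \<union> (+) (a + \<beta>) ` T) \<inter> {j..<j + \<beta>} = S \<inter> {j..<j + \<beta>}"
      by auto
    then show ?thesis
      using \<open>sparse S\<close> by (simp add: sparse_def)
  next
    case False
    with \<open>S \<subseteq> {..<a}\<close> have "(S \<union> (+) (a + \<beta>) ` T) \<inter> {j..<j + \<beta>} = (+) (a + \<beta>) ` T \<inter> {j..<j + \<beta>}"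
      by auto
    then show ?thesis
      using card_shifted_window_le[of "a + \<beta>" T j \<beta>] \<open>sparse T\<close> by (simp add: sparse_def le_trans)
  qed
qed

lemma sparse_if_residues_below:
  assumes "p \<le> \<beta>" "\<And>x. x \<in> S \<Longrightarrow> x mod \<beta> < p"
  shows "sparse S"
  unfolding sparse_def
proof
  fix j
  have "inj_on (\<lambda>x. x mod \<beta>) (S \<inter> {j..<j + \<beta>})"
    by (rule inj_on_subset[OF inj_on_mod_window]) auto
  then have "card (S \<inter> {j..<j + \<beta>}) = card ((\<lambda>x. x mod \<beta>) ` (S \<inter> {j..<j + \<beta>}))"
    by (intro card_image[symmetric])
  also have "\<dots> \<le> card {..<p}"
    using assms(2) by (intro card_mono) auto
  finally show "card (S \<inter> {j..<j + \<beta>}) \<le> p"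
    by simp
qed

lemma changed_gap_concat:
  assumes "length xa = a" "length ya = a"
  shows "changed (xa @ replicate \<beta> False @ xb) (ya @ replicate \<beta> False @ yb)
    = changed xa ya \<union> (+) (a + \<beta>) ` changed xb yb"
proof -
  have "changed (replicate \<beta> False) (replicate \<beta> False) = {}"
    by (simp add: changed_def)
  then have "changed (replicate \<beta> False @ xb) (replicate \<beta> False @ yb) = (+) \<beta> ` changed xb yb"
    by (simp add: changed_append)
  then show ?thesis
    using assms by (simp add: changed_append image_image add.assoc)
qed

lemma sparse_gap_concat:
  assumes "length xa = a" "length ya = a" "sparse (changed xa ya)" "sparse (changed xb yb)"
  shows "sparse (changed (xa @ replicate \<beta> False @ xb) (ya @ replicate \<beta> False @ yb))"
  unfolding changed_gap_concat[OF assms(1,2)]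
  using assms changed_subset[of xa ya] by (intro sparse_concat) auto

lemma sparse_changed_WWL:
  assumes "x \<in> WWL_set N \<beta> p" "\<beta> \<le> N"
  shows "sparse (changed (replicate N False) x)"
proof -
  have len: "length x = N"
    using assms(1) unfolding WWL_set_def by simp
  have "card (changed (replicate N False) x \<inter> {j..<j + \<beta>}) \<le> p" if "j + \<beta> \<le> N" for j
  proof -
    have "card (changed (replicate N False) x \<inter> {j..<j + \<beta>}) = card {l. l < \<beta> \<and> j + l < N \<and> x ! (j + l)}"
      unfolding changed_replicate_False by (rule card_window_shift[symmetric])
    also have "{l. l < \<beta> \<and> j + l < N \<and> x ! (j + l)}
        = {l. l < length (take \<beta> (drop j x)) \<and> id (take \<beta> (drop j x) ! l)}"
      using len that by auto
    also have "card \<dots> = length (filter id (take \<beta> (drop j x)))"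
      by (rule length_filter_conv_card[symmetric])
    also have "\<dots> \<le> p"
      using assms(1) that unfolding WWL_set_def by simp
    finally show ?thesis .
  qed
  then show ?thesis
    using sparse_if_full_windows[of _ N] changed_subset[of "replicate N False" x] \<open>\<beta> \<le> N\<close> by simp
qed

definition sparse_updates :: "nat \<Rightarrow> (nat \<Rightarrow> nat) \<Rightarrow> (nat \<Rightarrow> nat \<Rightarrow> bool list \<Rightarrow> bool list) \<Rightarrow> bool" where
  "sparse_updates n M E \<longleftrightarrow>
    (\<forall>msg. msgs_within M msg \<longrightarrow> (\<forall>i. sparse (changed (states n E msg i) (states n E msg (Suc i)))))"

text \<open>Describing a code by its message counts rather than by its rates turns placing two codes
  side by side into multiplying the counts.\<close>

definition achievable :: "nat \<Rightarrow> (nat \<Rightarrow> nat) \<Rightarrow> bool" where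
  "achievable n M \<longleftrightarrow> (\<forall>i\<ge>1. 1 \<le> M i) \<and> (\<exists>E D. decodes n M E D \<and> sparse_updates n M E)"

lemma card_window_of_write:
  fixes s :: "nat \<Rightarrow> bool list"
  assumes "j + \<beta> \<le> length (s i)"
  shows "card {(k, l). k < (1::nat) \<and> l < \<beta> \<and> s (i + k) ! (j + l) \<noteq> s (i + k + 1) ! (j + l)}
    = card (changed (s i) (s (Suc i)) \<inter> {j..<j + \<beta>})"
proof -
  have "{(k, l). k < (1::nat) \<and> l < \<beta> \<and> s (i + k) ! (j + l) \<noteq> s (i + k + 1) ! (j + l)}
      = {0} \<times> {l. l < \<beta> \<and> s i ! (j + l) \<noteq> s (Suc i) ! (j + l)}"
    by auto
  then have "card {(k, l). k < (1::nat) \<and> l < \<beta> \<and> s (i + k) ! (j + l) \<noteq> s (i + k + 1) ! (j + l)}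
      = card {l. l < \<beta> \<and> s i ! (j + l) \<noteq> s (Suc i) ! (j + l)}"
    by (simp add: card_cartesian_product)
  also have "\<dots> = card ({q. s i ! q \<noteq> s (Suc i) ! q} \<inter> {j..<j + \<beta>})"
    by (rule card_window_shift)
  also have "{q. s i ! q \<noteq> s (Suc i) ! q} \<inter> {j..<j + \<beta>} = changed (s i) (s (Suc i)) \<inter> {j..<j + \<beta>}"
    using assms by (auto simp: changed_def)
  finally show ?thesis .
qed

lemma sparse_updates_if_constrained:
  assumes "is_code n R E D" "constrained n 1 \<beta> p R E" "\<beta> \<le> n"
  shows "sparse_updates n (\<lambda>i. num_msgs n (R i)) E"
  unfolding sparse_updates_def
proof (intro allI impI)
  fix msg i
  assume within: "msgs_within (\<lambda>i. num_msgs n (R i)) msg"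
  let ?x = "states n E msg i" and ?y = "states n E msg (Suc i)"
  have len: "length ?x = n"
    using length_states[OF decodes_if_is_code[OF assms(1)] within] .
  have "valid_msgs n R msg"
    using within by (simp add: valid_msgs_def msgs_within_def)
  have "card (changed ?x ?y \<inter> {j..<j + \<beta>}) \<le> p" if "j + \<beta> \<le> n" for j
  proof -
    have "card {(k, l). k < 1 \<and> l < \<beta> \<and>
        states n E msg (i + k) ! (j + l) \<noteq> states n E msg (i + k + 1) ! (j + l)} \<le> p"
      using assms(2) \<open>valid_msgs n R msg\<close> that unfolding constrained_def by blast
    moreover have "card {(k, l). k < 1 \<and> l < \<beta> \<and>
        states n E msg (i + k) ! (j + l) \<noteq> states n E msg (i + k + 1) ! (j + l)}
      = card (changed ?x ?y \<inter> {j..<j + \<beta>})"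
      using that len by (intro card_window_of_write) simp
    ultimately show ?thesis by linarith
  qed
  then show "sparse (changed ?x ?y)"
    using sparse_if_full_windows[of _ n] changed_subset[of ?x ?y] len \<open>\<beta> \<le> n\<close> by simp
qed

lemma constrained_if_sparse_updates:
  assumes "decodes n M E D" "sparse_updates n M E" and R: "\<And>i. i \<ge> 1 \<Longrightarrow> num_msgs n (R i) \<le> M i"
  shows "constrained n 1 \<beta> p R E"
  unfolding constrained_def
proof (intro allI impI)
  fix msg i j
  assume "valid_msgs n R msg" "j + \<beta> \<le> n"
  then have within: "msgs_within M msg"
    using R by (force simp: valid_msgs_def msgs_within_def)
  let ?x = "states n E msg i" and ?y = "states n E msg (Suc i)"
  have "card (changed ?x ?y \<inter> {j..<j + \<beta>}) \<le> p"
    using assms(2) within by (simp add: sparse_updates_def sparse_def)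
  moreover have "card {(k, l). k < 1 \<and> l < \<beta> \<and>
      states n E msg (i + k) ! (j + l) \<noteq> states n E msg (i + k + 1) ! (j + l)}
    = card (changed ?x ?y \<inter> {j..<j + \<beta>})"
    using length_states[OF assms(1) within, of i] \<open>j + \<beta> \<le> n\<close> by (intro card_window_of_write) simp
  ultimately show "card {(k, l). k < 1 \<and> l < \<beta> \<and>
      states n E msg (i + k) ! (j + l) \<noteq> states n E msg (i + k + 1) ! (j + l)} \<le> p"
    by linarith
qed

text \<open>Two codes run side by side, separated by \<open>\<beta>\<close> cells that are never written; a message of
  the combined code is a pair of messages, encoded in mixed radix.\<close>

lemma achievable_concat:
  assumes "achievable a MA" "achievable b MB"
  shows "achievable (a + \<beta> + b) (\<lambda>i. MA i * MB i)"
proof -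
  obtain EA DA where MA: "\<And>i. i \<ge> 1 \<Longrightarrow> MA i \<ge> 1" and dA: "decodes a MA EA DA"
    and sA: "sparse_updates a MA EA"
    using assms(1) unfolding achievable_def by blast
  obtain EB DB where MB: "\<And>i. i \<ge> 1 \<Longrightarrow> MB i \<ge> 1" and dB: "decodes b MB EB DB"
    and sB: "sparse_updates b MB EB"
    using assms(2) unfolding achievable_def by blast
  define fst_msg where "fst_msg = (\<lambda>i m. (m - 1) div MB i + 1)"
  define snd_msg where "snd_msg = (\<lambda>i m. (m - 1) mod MB i + 1)"
  define E where "E = (\<lambda>i m u. EA i (fst_msg i m) (take a u) @ replicate \<beta> False
    @ EB i (snd_msg i m) (drop (a + \<beta>) u))"
  define D where "D = (\<lambda>i x. (DA i (take a x) - 1) * MB i + DB i (drop (a + \<beta>) x))"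
  have split: "fst_msg i m \<in> {1..MA i} \<and> snd_msg i m \<in> {1..MB i}"
    if "i \<ge> 1" "m \<in> {1..MA i * MB i}" for i m
    unfolding fst_msg_def snd_msg_def using mixed_radix_digits(1,2)[OF MB[OF that(1)] that(2)] by blast
  have "decodes (a + \<beta> + b) (\<lambda>i. MA i * MB i) E D"
    unfolding decodes_def
  proof (intro allI impI conjI)
    fix i m and u :: "bool list"
    assume "i \<ge> 1" and mu: "m \<in> {1..MA i * MB i} \<and> length u = a + \<beta> + b"
    have A: "length (EA i (fst_msg i m) (take a u)) = a" "DA i (EA i (fst_msg i m) (take a u)) = fst_msg i m"
      using dA split[OF \<open>i \<ge> 1\<close>] \<open>i \<ge> 1\<close> mu unfolding decodes_def by auto
    have B: "length (EB i (snd_msg i m) (drop (a + \<beta>) u)) = b"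
      "DB i (EB i (snd_msg i m) (drop (a + \<beta>) u)) = snd_msg i m"
      using dB split[OF \<open>i \<ge> 1\<close>] \<open>i \<ge> 1\<close> mu unfolding decodes_def by auto
    show "length (E i m u) = a + \<beta> + b"
      unfolding E_def using A B by simp
    have "D i (E i m u) = (fst_msg i m - 1) * MB i + snd_msg i m"
      unfolding D_def E_def using A B by simp
    also have "\<dots> = m"
      unfolding fst_msg_def snd_msg_def
      by (rule mixed_radix_digits(3)[where m = m and ma = "MA i" and mb = "MB i", OF MB[OF \<open>i \<ge> 1\<close>]]) (use mu in blast)
    finally show "D i (E i m u) = m" .
  qed
  moreover have "sparse_updates (a + \<beta> + b) (\<lambda>i. MA i * MB i) E"
    unfolding sparse_updates_def
  proof (intro allI impI)
    fix msg i
    assume within: "msgs_within (\<lambda>i. MA i * MB i) msg"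
    define msgA where "msgA = (\<lambda>i. fst_msg i (msg i))"
    define msgB where "msgB = (\<lambda>i. snd_msg i (msg i))"
    have wA: "msgs_within MA msgA" and wB: "msgs_within MB msgB"
      using within split unfolding msgs_within_def msgA_def msgB_def by auto
    have states: "states (a + \<beta> + b) E msg k
        = states a EA msgA k @ replicate \<beta> False @ states b EB msgB k" for k
    proof (induction k)
      case 0
      then show ?case by (simp add: replicate_add[symmetric])
    next
      case (Suc k)
      then show ?case
        using length_states[OF dA wA, of k] by (simp add: E_def msgA_def msgB_def)
    qed
    show "sparse (changed (states (a + \<beta> + b) E msg i) (states (a + \<beta> + b) E msg (Suc i)))"
      unfolding states
      by (rule sparse_gap_concat[OF length_states[OF dA wA] length_states[OF dA wA]])
        (use sA sB wA wB in \<open>auto simp: sparse_updates_def\<close>)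
  qed
  moreover have "\<forall>i\<ge>1. 1 \<le> MA i * MB i"
    using MA MB by (simp add: one_le_mult_iff)
  ultimately show ?thesis
    unfolding achievable_def by blast
qed

lemma achievable_blank: "achievable n (\<lambda>_. 1)"
proof -
  let ?E = "\<lambda>i m u. replicate n False"
  have "states n ?E msg k = replicate n False" for msg k
    by (cases k) auto
  then have "sparse_updates n (\<lambda>_. 1) ?E"
    unfolding sparse_updates_def sparse_def by (simp add: changed_def)
  moreover have "decodes n (\<lambda>_. 1) ?E (\<lambda>_ _. 1)"
    unfolding decodes_def by auto
  ultimately show ?thesis
    unfolding achievable_def by auto
qed

lemma achievable_power:
  assumes "achievable n M" "k \<ge> 1"
  shows "achievable (k * (n + \<beta>) - \<beta>) (\<lambda>i. M i ^ k)"
  using \<open>k \<ge> 1\<close>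
proof (induction k rule: dec_induct)
  case (step k)
  have "\<beta> \<le> k * (n + \<beta>)"
    using \<open>k \<ge> 1\<close> by (metis le_add2 mult_1 mult_le_mono1 order_trans)
  then have "n + \<beta> + (k * (n + \<beta>) - \<beta>) = Suc k * (n + \<beta>) - \<beta>"
    by simp
  then show ?case
    using achievable_concat[OF assms(1) step.IH] by simp
qed (use assms(1) in simp)

lemma achievable_padded:
  assumes "achievable n M" "N \<ge> n + \<beta>"
  shows "achievable N (\<lambda>i. M i ^ (N div (n + \<beta>)))"
proof -
  define k where "k = N div (n + \<beta>)"
  have "k \<ge> 1"
    using assms(2) window_pos unfolding k_def by (simp add: Suc_le_eq div_greater_zero_iff)
  then have "\<beta> \<le> k * (n + \<beta>)"
    by (metis le_add2 mult_1 mult_le_mono1 order_trans)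
  then have "k * (n + \<beta>) - \<beta> + \<beta> + N mod (n + \<beta>) = N"
    unfolding k_def by (simp add: div_mult_mod_eq)
  moreover have "achievable (k * (n + \<beta>) - \<beta> + \<beta> + N mod (n + \<beta>)) (\<lambda>i. M i ^ k * 1)"
    by (rule achievable_concat[OF achievable_power[OF assms(1) \<open>k \<ge> 1\<close>] achievable_blank])
  ultimately show ?thesis
    unfolding k_def by simp
qed

lemma achievable_memoryless:
  fixes W :: "nat \<Rightarrow> nat \<Rightarrow> bool list"
  assumes M_pos: "\<And>i. i \<ge> 1 \<Longrightarrow> 1 \<le> M i"
    and inj: "\<And>i. i \<ge> 1 \<Longrightarrow> inj_on (W i) {1..M i}"
    and len: "\<And>i m. i \<ge> 1 \<Longrightarrow> m \<in> {1..M i} \<Longrightarrow> length (W i m) = n"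
    and first: "\<And>m. m \<in> {1..M 1} \<Longrightarrow> sparse (changed (replicate n False) (W 1 m))"
    and step: "\<And>i m m'. i \<ge> 1 \<Longrightarrow> m \<in> {1..M i} \<Longrightarrow> m' \<in> {1..M (Suc i)}
      \<Longrightarrow> sparse (changed (W i m) (W (Suc i) m'))"
  shows "achievable n M"
proof -
  let ?E = "\<lambda>i m u. W i m" and ?D = "\<lambda>i x. the_inv_into {1..M i} (W i) x"
  have "decodes n M ?E ?D"
    unfolding decodes_def using len inj by (auto simp: the_inv_into_f_f)
  moreover have "sparse_updates n M ?E"
    unfolding sparse_updates_def
  proof (intro allI impI)
    fix msg i
    assume "msgs_within M msg"
    then have msg: "msg k \<in> {1..M k}" if "k \<ge> 1" for k
      using that by (simp add: msgs_within_def)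
    show "sparse (changed (states n ?E msg i) (states n ?E msg (Suc i)))"
    proof (cases i)
      case 0
      then show ?thesis
        using first msg[of 1] by simp
    next
      case (Suc k)
      then show ?thesis
        using step[of "Suc k"] msg[of "Suc k"] msg[of "Suc (Suc k)"] by simp
    qed
  qed
  ultimately show ?thesis
    using M_pos unfolding achievable_def by blast
qed

lemma achievable_word_set:
  assumes "finite Q" "replicate n False \<in> Q" and len: "\<And>x. x \<in> Q \<Longrightarrow> length x = n"
    and sparse: "\<And>x y. x \<in> Q \<Longrightarrow> y \<in> Q \<Longrightarrow> sparse (changed x y)"
  shows "achievable n (\<lambda>_. card Q)"
proof -
  obtain word where word: "bij_betw word {1..card Q} Q"
    using ex_bij_betw_nat_finite_1[OF \<open>finite Q\<close>] by blast
  then have word_in: "word m \<in> Q" if "m \<in> {1..card Q}" for m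
    using that by (auto dest: bij_betwE)
  show ?thesis
  proof (rule achievable_memoryless[where W = "\<lambda>_. word"])
    show "1 \<le> card Q"
      using assms(1,2) by (simp add: Suc_le_eq card_gt_0_iff) blast
    show "inj_on word {1..card Q}"
      using word by (rule bij_betw_imp_inj_on)
  qed (use word_in len sparse assms(2) in auto)
qed

definition code_rates :: "nat \<Rightarrow> real set" where
  "code_rates n = {r. \<exists>R E D. is_code n R E D \<and> constrained n 1 \<beta> p R E \<and> has_rate R r}"

lemma C_n_eq_Sup: "C_n n 1 \<beta> p = Sup (code_rates n)"
  unfolding C_n_def code_rates_def ..

lemma zero_in_code_rates: "0 \<in> code_rates n"
proof -
  let ?E = "\<lambda>i m u. u"
  have "states n ?E msg i = replicate n False" for msg i
    by (induction i) auto
  then have "constrained n 1 \<beta> p (\<lambda>_. 0) ?E"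
    unfolding constrained_def by simp
  moreover have "is_code n (\<lambda>_. 0) ?E (\<lambda>_ _. 1)"
    unfolding is_code_def num_msgs_def by simp
  moreover have "has_rate (\<lambda>_. 0) 0"
    unfolding has_rate_def by simp
  ultimately show ?thesis
    unfolding code_rates_def by blast
qed

lemma code_rates_le_two: "n \<ge> 1 \<Longrightarrow> r \<in> code_rates n \<Longrightarrow> r \<le> 2"
  unfolding code_rates_def using has_rate_le rate_le_two by blast

lemma bdd_above_code_rates: "n \<ge> 1 \<Longrightarrow> bdd_above (code_rates n)"
  using code_rates_le_two by (intro bdd_aboveI[where M = 2]) auto

lemma le_C_n: "n \<ge> 1 \<Longrightarrow> r \<in> code_rates n \<Longrightarrow> r \<le> C_n n 1 \<beta> p"
  unfolding C_n_eq_Sup using bdd_above_code_rates by (intro cSup_upper)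

lemma C_n_nonneg: "n \<ge> 1 \<Longrightarrow> 0 \<le> C_n n 1 \<beta> p"
  using le_C_n zero_in_code_rates by blast

lemma C_n_le_two: "n \<ge> 1 \<Longrightarrow> C_n n 1 \<beta> p \<le> 2"
  unfolding C_n_eq_Sup using zero_in_code_rates code_rates_le_two by (intro cSup_least) auto

lemma less_C_n_imp_code:
  assumes "n \<ge> 1" "r < C_n n 1 \<beta> p"
  obtains R E D r' where "r < r'" "is_code n R E D" "constrained n 1 \<beta> p R E" "has_rate R r'"
proof -
  have "\<exists>r'\<in>code_rates n. r < r'"
    using assms bdd_above_code_rates zero_in_code_rates unfolding C_n_eq_Sup
    by (subst less_cSup_iff[symmetric]) auto
  then show thesis
    using that unfolding code_rates_def by blast
qed

lemma rate_le_C_n: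
  assumes "n \<ge> 1" "decodes n M E D" "sparse_updates n M E"
    and R: "\<And>i. i \<ge> 1 \<Longrightarrow> 0 \<le> R i \<and> num_msgs n (R i) \<le> M i" and "has_rate R r"
  shows "r \<le> C_n n 1 \<beta> p"
proof (rule le_C_n[OF \<open>n \<ge> 1\<close>])
  have "is_code n R E D"
    unfolding is_code_def
  proof (intro allI impI conjI)
    fix i m :: nat and u :: "bool list"
    assume "i \<ge> 1"
    then show "0 \<le> R i"
      using R by simp
    assume "m \<in> {1..num_msgs n (R i)} \<and> length u = n"
    moreover have "num_msgs n (R i) \<le> M i"
      using R \<open>i \<ge> 1\<close> by simp
    ultimately show "length (E i m u) = n" "D i (E i m u) = m"
      using assms(2) \<open>i \<ge> 1\<close> unfolding decodes_def by auto
  qed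
  moreover have "constrained n 1 \<beta> p R E"
    using R by (intro constrained_if_sparse_updates[OF assms(2,3)]) simp
  ultimately show "r \<in> code_rates n"
    using \<open>has_rate R r\<close> unfolding code_rates_def by blast
qed

lemma C_n_ge_average_log_msgs:
  assumes "N \<ge> 1" "achievable N M"
    and below: "\<And>i. i \<ge> 1 \<Longrightarrow> w i \<le> log 2 (real (M i)) / real N" and "has_rate w \<tau>"
  shows "\<tau> \<le> C_n N 1 \<beta> p"
proof (cases "\<tau> < 0")
  case True
  then show ?thesis
    using C_n_nonneg[OF \<open>N \<ge> 1\<close>] by linarith
next
  case False
  obtain E D where M_pos: "\<And>i. i \<ge> 1 \<Longrightarrow> 1 \<le> M i" and "decodes N M E D" "sparse_updates N M E"
    using assms(2) unfolding achievable_def by blast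
  define t where "t = (\<lambda>i. log 2 (real (M i)) / real N)"
  have "0 \<le> t i" if "i \<ge> 1" for i
    using M_pos[OF that] unfolding t_def by simp
  then obtain s where s: "\<And>i. i \<ge> 1 \<Longrightarrow> 0 \<le> s i \<and> s i \<le> t i" and "has_rate s \<tau>"
    using exists_rate_below[of t w \<tau> \<tau>] below \<open>has_rate w \<tau>\<close> False unfolding t_def by force
  have "0 \<le> s i \<and> num_msgs N (s i) \<le> M i" if "i \<ge> 1" for i
  proof -
    have "real (num_msgs N (s i)) \<le> 2 powr (real N * s i)"
      by (rule num_msgs_le_powr)
    also have "\<dots> \<le> 2 powr (real N * t i)"
      using s[OF that] by (simp add: mult_left_mono)
    also have "\<dots> = real (M i)"
      using M_pos[OF that] \<open>N \<ge> 1\<close> unfolding t_def by simp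
    finally show ?thesis
      using s[OF that] by (simp only: of_nat_le_iff)
  qed
  then show ?thesis
    using rate_le_C_n[OF \<open>N \<ge> 1\<close> \<open>decodes N M E D\<close> \<open>sparse_updates N M E\<close>] \<open>has_rate s \<tau>\<close> by blast
qed

lemma C_n_ge_blocks:
  assumes "\<beta> \<le> n" "is_code n R E D" "constrained n 1 \<beta> p R E" "has_rate R r" "N \<ge> n + \<beta>"
  shows "real (N div (n + \<beta>)) * (real n * r - 1) / real N \<le> C_n N 1 \<beta> p"
proof -
  define k where "k = N div (n + \<beta>)"
  define M where "M = (\<lambda>i. num_msgs n (R i))"
  have R_nonneg: "0 \<le> R i" if "i \<ge> 1" for i
    using assms(2) that unfolding is_code_def by simp
  have "achievable n M"
    unfolding achievable_def M_def
    using num_msgs_ge_one R_nonneg decodes_if_is_code[OF assms(2)]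
      sparse_updates_if_constrained[OF assms(2,3,1)] by blast
  then have padded: "achievable N (\<lambda>i. M i ^ k)"
    unfolding k_def using assms(5) by (rule achievable_padded)
  have "N \<ge> 1"
    using assms(5) window_pos by simp
  have below: "real k / real N * (real n * R i - 1) \<le> log 2 (real (M i ^ k)) / real N" if "i \<ge> 1" for i
  proof -
    have "real n * R i - 1 \<le> log 2 (real (M i))"
      unfolding M_def using R_nonneg[OF that] by (rule log_num_msgs_ge)
    moreover have "M i \<ge> 1"
      unfolding M_def using R_nonneg[OF that] by (rule num_msgs_ge_one)
    ultimately show ?thesis
      by (simp add: log_nat_power divide_right_mono mult_left_mono)
  qed
  have rate: "has_rate (\<lambda>i. real k / real N * (real n * R i - 1)) (real k / real N * (real n * r - 1))"
    using has_rate_affine[OF assms(4), of "real k / real N * real n" "- real k / real N"]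
    by (simp add: algebra_simps)
  have "real k / real N * (real n * r - 1) \<le> C_n N 1 \<beta> p"
    by (rule C_n_ge_average_log_msgs[OF \<open>N \<ge> 1\<close> padded _ rate]) (rule below)
  then show ?thesis
    unfolding k_def by simp
qed

lemma C_n_eventually_almost_ge:
  assumes "n \<ge> \<beta> + 1" "\<epsilon> > 0"
  shows "\<forall>\<^sub>F N in sequentially. C_n n 1 \<beta> p - (2 * real \<beta> + 1) / real n - \<epsilon> \<le> C_n N 1 \<beta> p"
proof -
  have "n \<ge> 1" "\<beta> \<le> n"
    using assms(1) by simp_all
  have "C_n n 1 \<beta> p - \<epsilon> / 2 < C_n n 1 \<beta> p"
    using \<open>\<epsilon> > 0\<close> by simp
  then obtain R E D r where r: "C_n n 1 \<beta> p - \<epsilon> / 2 < r" and code: "is_code n R E D"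
    and constr: "constrained n 1 \<beta> p R E" and rate: "has_rate R r"
    by (rule less_C_n_imp_code[OF \<open>n \<ge> 1\<close>])
  have "r \<le> 2"
    using rate rate_le_two[OF \<open>n \<ge> 1\<close> code] by (rule has_rate_le)
  define A where "A = real n * r - 1"
  have A_ge: "r - (2 * real \<beta> + 1) / real n \<le> A / real (n + \<beta>)"
  proof -
    have "r - A / real (n + \<beta>) = (real \<beta> * r + 1) / real (n + \<beta>)"
      using \<open>n \<ge> 1\<close> unfolding A_def by (simp add: field_simps)
    also have "\<dots> \<le> (2 * real \<beta> + 1) / real (n + \<beta>)"
      using mult_left_mono[OF \<open>r \<le> 2\<close>, of "real \<beta>"] by (intro divide_right_mono) simp_all
    also have "\<dots> \<le> (2 * real \<beta> + 1) / real n"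
      using \<open>n \<ge> 1\<close> by (intro divide_left_mono) simp_all
    finally show ?thesis
      by simp
  qed
  have "\<forall>\<^sub>F N in sequentially. \<bar>A\<bar> / real N < \<epsilon> / 2"
    using order_tendstoD(2)[OF lim_const_over_n[of "\<bar>A\<bar>"], of "\<epsilon> / 2"] \<open>\<epsilon> > 0\<close> by simp
  with eventually_ge_at_top[of "n + \<beta>"] show ?thesis
  proof eventually_elim
    case (elim N)
    have "A / real (n + \<beta>) - \<bar>A\<bar> / real N \<le> real (N div (n + \<beta>)) * A / real N"
      using \<open>n \<ge> 1\<close> elim(1) by (intro div_mult_divide_ge) simp_all
    also have "\<dots> \<le> C_n N 1 \<beta> p"
      unfolding A_def using \<open>\<beta> \<le> n\<close> code constr rate elim(1) by (rule C_n_ge_blocks)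
    finally show ?case
      using elim(2) r A_ge by linarith
  qed
qed

lemma convergent_C_n: "convergent (\<lambda>n. C_n n 1 \<beta> p)"
proof (rule convergent_if_eventually_almost_ge[of _ "\<beta> + 1" "2 * real \<beta> + 1"])
  \<comment> \<open>\<open>C_n 0\<close> is the supremum of an unbounded set, so only the shifted sequence is bounded\<close>
  have "Bseq (\<lambda>n. C_n (n + 1) 1 \<beta> p)"
    using C_n_nonneg C_n_le_two by (intro BseqI'[of _ 2]) simp
  then show "Bseq (\<lambda>n. C_n n 1 \<beta> p)"
    by (rule Bseq_offset)
next
  fix n :: nat and \<epsilon> :: real
  assume "\<beta> + 1 \<le> n" "\<epsilon> > 0"
  then show "\<forall>\<^sub>F N in sequentially. C_n n 1 \<beta> p - (2 * real \<beta> + 1) / real n - \<epsilon> \<le> C_n N 1 \<beta> p"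
    by (rule C_n_eventually_almost_ge)
qed

text \<open>Odd writes store an arbitrary \<open>(\<beta>, p)\<close>-window-weight-limited word, even writes erase it
  again; this attains half the window-weight-limited capacity.\<close>

lemma C_n_ge_WWL:
  assumes "\<beta> \<le> N"
  shows "log 2 (real (card (WWL_set N \<beta> p))) / real N / 2 \<le> C_n N 1 \<beta> p"
proof -
  define c where "c = card (WWL_set N \<beta> p)"
  obtain word where word: "bij_betw word {1..c} (WWL_set N \<beta> p)"
    unfolding c_def using ex_bij_betw_nat_finite_1[OF finite_WWL_set] by blast
  have word_in: "word m \<in> WWL_set N \<beta> p" if "m \<in> {1..c}" for m
    using word that by (auto dest: bij_betwE)
  have "c \<ge> 1"
    unfolding c_def using card_WWL_set_pos by (simp add: Suc_le_eq)
  define W where "W = (\<lambda>i::nat. \<lambda>m. if odd i then word m else replicate N False)"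
  define M where "M = (\<lambda>i::nat. if odd i then c else 1)"
  have lengths: "length (word m) = N" if "m \<in> {1..c}" for m
    using word_in[OF that] unfolding WWL_set_def by simp
  have ach: "achievable N M"
  proof (rule achievable_memoryless[where W = W])
    show "1 \<le> M i" for i
      using \<open>c \<ge> 1\<close> unfolding M_def by simp
    show "inj_on (W i) {1..M i}" for i
      using bij_betw_imp_inj_on[OF word] unfolding W_def M_def by simp
    show "length (W i m) = N" if "m \<in> {1..M i}" for i m
      using lengths that unfolding W_def M_def by (simp split: if_splits)
    show "sparse (changed (replicate N False) (W 1 m))" if "m \<in> {1..M 1}" for m
      using sparse_changed_WWL[OF word_in \<open>\<beta> \<le> N\<close>] that unfolding W_def M_def by simp
    show "sparse (changed (W i m) (W (Suc i) m'))"
      if "m \<in> {1..M i}" "m' \<in> {1..M (Suc i)}" for i m m'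
    proof (cases "odd i")
      case True
      then have "changed (W i m) (W (Suc i) m') = changed (replicate N False) (word m)"
        using that lengths unfolding W_def M_def by (simp add: changed_commute)
      then show ?thesis
        using sparse_changed_WWL[OF word_in \<open>\<beta> \<le> N\<close>] that True unfolding M_def by simp
    next
      case False
      then show ?thesis
        using sparse_changed_WWL[OF word_in \<open>\<beta> \<le> N\<close>] that unfolding W_def M_def by simp
    qed
  qed
  have "N \<ge> 1"
    using assms window_pos by simp
  have below: "(if odd i then log 2 (real c) / real N else 0) \<le> log 2 (real (M i)) / real N" for i
    unfolding M_def by simp
  have "log 2 (real c) / real N / 2 \<le> C_n N 1 \<beta> p"
    by (rule C_n_ge_average_log_msgs[OF \<open>N \<ge> 1\<close> ach below has_rate_alternating])
  then show ?thesis
    unfolding c_def .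
qed

text \<open>Only the cells \<open>a\<beta> + b\<close> with \<open>b < p\<close> and \<open>a < N div \<beta>\<close> are ever used, and every write
  stores an arbitrary word on them; a window of \<open>\<beta>\<close> cells meets at most \<open>p\<close> of them.\<close>

lemma C_n_ge_periodic:
  assumes "N \<ge> 1" "p \<le> \<beta>"
  shows "real p * real (N div \<beta>) / real N \<le> C_n N 1 \<beta> p"
proof -
  define q where "q = N div \<beta>"
  define P where "P = (\<lambda>(a, c). a * \<beta> + c) ` ({..<q} \<times> {..<p})"
  have "P \<subseteq> {..<N}"
    using periodic_cells_below[OF \<open>p \<le> \<beta>\<close>, of q] unfolding P_def q_def
    by (meson div_times_less_eq_dividend lessThan_subset_iff order_trans)
  note words = card_supported_words[OF this]
  have "sparse P"
    using \<open>p \<le> \<beta>\<close> by (rule sparse_if_residues_below) (use \<open>p \<le> \<beta>\<close> in \<open>auto simp: P_def\<close>)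
  have "achievable N (\<lambda>_. card (supported_words N P))"
  proof (rule achievable_word_set)
    show "length x = N" if "x \<in> supported_words N P" for x
      using that by (simp add: supported_words_def)
    show "sparse (changed x y)" if "x \<in> supported_words N P" "y \<in> supported_words N P" for x y
      using \<open>sparse P\<close> changed_supported_words[OF that] by (rule sparse_subset)
  qed (simp_all add: words(1) replicate_False_in_supported_words)
  moreover have "card (supported_words N P) = 2 ^ (q * p)"
    using words(2) card_periodic_cells[OF \<open>p \<le> \<beta>\<close>] unfolding P_def by simp
  ultimately have "real (q * p) / real N \<le> C_n N 1 \<beta> p"
    using C_n_ge_average_log_msgs[OF \<open>N \<ge> 1\<close> _ _ has_rate_const] by (simp add: log_nat_power)
  then show ?thesis
    unfolding q_def by (simp add: mult.commute)
qed

end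

theorem corollary1:
  fixes \<beta> p :: nat
  assumes "0 < \<beta>" and "0 < p" and "p \<le> \<beta>"
  shows "C 1 \<beta> p \<ge> max (C_WWL \<beta> p / 2) (real p / real \<beta>)"
proof -
  interpret window_limit \<beta> p
    using \<open>0 < \<beta>\<close> by unfold_locales
  obtain L where lim: "(\<lambda>N. C_n N 1 \<beta> p) \<longlonglongrightarrow> L"
    using convergent_C_n by (auto simp: convergent_def)
  then have "C 1 \<beta> p = L"
    unfolding C_def by (rule limI)
  have "real p / real \<beta> \<le> L"
  proof (rule tendsto_le[OF _ lim])
    show "(\<lambda>N. real p * real (N div \<beta>) / real N) \<longlonglongrightarrow> real p / real \<beta>"
      using tendsto_mult[OF tendsto_const div_over_n_tendsto[OF \<open>0 < \<beta>\<close>], of "real p"] by simp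
    show "\<forall>\<^sub>F N in sequentially. real p * real (N div \<beta>) / real N \<le> C_n N 1 \<beta> p"
      using eventually_ge_at_top[of 1] by eventually_elim (rule C_n_ge_periodic[OF _ \<open>p \<le> \<beta>\<close>])
  qed simp
  moreover have "C_WWL \<beta> p / 2 \<le> L"
  proof (rule tendsto_le[OF _ lim])
    show "(\<lambda>N. log 2 (real (card (WWL_set N \<beta> p))) / real N / 2) \<longlonglongrightarrow> C_WWL \<beta> p / 2"
      by (intro tendsto_divide WWL_rate_tendsto tendsto_const) simp
    show "\<forall>\<^sub>F N in sequentially. log 2 (real (card (WWL_set N \<beta> p))) / real N / 2 \<le> C_n N 1 \<beta> p"
      using eventually_ge_at_top[of \<beta>] by eventually_elim (rule C_n_ge_WWL)
  qed simp
  ultimately show ?thesis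
    using \<open>C 1 \<beta> p = L\<close> by simp
qed

end
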